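(* $\mathrm{PBTD}(\Pi^\infty)=2$, and for every $m\ge1$, $\mathrm{PBTD}(\Pi^1_{\infty,m})=\Theta(m)$ (as a function of $m$).
   Context: Fix a countably infinite set $X$ of variables and an alphabet $\Sigma$ (finite or countably infinite, disjoint from $X$), $z=|\Sigma|$. A pattern is a nonempty finite string over $X\cup\Sigma$; $\Pi^z$ is the class of all patterns over an alphabet of size $z$ ($\Pi^\infty$: over a countably infinite alphabet). $\Pi^z_{\infty,m}$ is the class of patterns in $\Pi^z$ in which every variable occurs at most $m$ times (no bound on the number of distinct variables). A substitution is a morphism $h:(X\cup\Sigma)^*\to\Sigma^*$ fixing letters; $L(\pi)$ (erasing pattern language) is the set of all $h(\pi)$; patterns with equal languages are identified. A labelled example is $(w,\pm)$ with $w\in\Sigma^*$; a teaching set for $\pi$ w.r.t. a class $\Pi$ is a set $T$ of labelled examples consistent with $\pi$ such that every $\tau\in\Pi$ consistent with $T$ has $L(\tau)=L(\pi)$. For a strict partial order $\prec$ on $\Pi$, a teaching set for $\pi$ w.r.t. $(\Pi,\prec)$ is a teaching set for $\pi$ w.r.t. $\Pi\setminus\{\pi':\pi'\prec\pi\}$; $\mathrm{PBTD}(\Pi,\prec)$ is the supremum over $\pi$ of the minimum size of such sets and $\mathrm{PBTD}(\Pi)=\inf_\prec\mathrm{PBTD}(\Pi,\prec)$. *)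

theory Defs
  imports Main "HOL-Library.Extended_Nat"
begin

text \<open>Symbols of a pattern: variables (indexed by nat, a countably infinite set X)
  and letters of the alphabet, which is the whole type 'a
  (Sigma = UNIV :: 'a set; 'a = nat gives a countably infinite alphabet,
  'a = unit gives an alphabet of size 1).\<close>
datatype 'a psym = Var nat | Let 'a

type_synonym 'a pattern = "'a psym list"

definition subst :: "(nat \<Rightarrow> 'a list) \<Rightarrow> 'a pattern \<Rightarrow> 'a list" where
  "subst h p = concat (map (\<lambda>s. case s of Var x \<Rightarrow> h x | Let a \<Rightarrow> [a]) p)"

definition patlang :: "'a pattern \<Rightarrow> 'a list set" where
  "patlang p = {subst h p | h. True}"

definition all_patterns :: "'a pattern set" where
  "all_patterns = {p. p \<noteq> []}"

definition patterns_bounded_occ :: "nat \<Rightarrow> 'a pattern set" where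
  "patterns_bounded_occ m =
     {p. p \<noteq> [] \<and> (\<forall>x. length (filter (\<lambda>s. s = Var x) p) \<le> m)}"

definition consistent :: "'a list set \<Rightarrow> ('a list \<times> bool) set \<Rightarrow> bool" where
  "consistent L T \<longleftrightarrow> (\<forall>(w, b) \<in> T. (w \<in> L) = b)"

definition teaching_set :: "'a list set set \<Rightarrow> 'a list set \<Rightarrow> ('a list \<times> bool) set \<Rightarrow> bool" where
  "teaching_set C L T \<longleftrightarrow> consistent L T \<and> (\<forall>L' \<in> C. consistent L' T \<longrightarrow> L' = L)"

definition strict_po_on :: "'b set \<Rightarrow> ('b \<Rightarrow> 'b \<Rightarrow> bool) \<Rightarrow> bool" where
  "strict_po_on C R \<longleftrightarrow> (\<forall>x\<in>C. \<not> R x x) \<and>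
     (\<forall>x\<in>C. \<forall>y\<in>C. \<forall>z\<in>C. R x y \<longrightarrow> R y z \<longrightarrow> R x z)"

text \<open>Minimum size of a teaching set for L w.r.t. (C, R) (infinity if none exists).\<close>
definition pref_td :: "'a list set set \<Rightarrow> ('a list set \<Rightarrow> 'a list set \<Rightarrow> bool) \<Rightarrow> 'a list set \<Rightarrow> enat" where
  "pref_td C R L = Inf {enat (card T) | T. finite T \<and> teaching_set (C - {L'. R L' L}) L T}"

definition PBTD_order :: "'a list set set \<Rightarrow> ('a list set \<Rightarrow> 'a list set \<Rightarrow> bool) \<Rightarrow> enat" where
  "PBTD_order C R = Sup (pref_td C R ` C)"

definition PBTD :: "'a list set set \<Rightarrow> enat" where
  "PBTD C = Inf {PBTD_order C R | R. strict_po_on C R}"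

definition lang_class :: "'a pattern set \<Rightarrow> 'a list set set" where
  "lang_class P = patlang ` P"

end

theory Submission
  imports Defs
begin

text \<open>Over an infinite alphabet, prefer larger
  languages: two instances of \<open>p\<close> that replace the variables by fresh letters, using disjoint
  codings, force any pattern generating both to generate all of \<open>L(p)\<close>. Over a one-letter alphabet a
  language is a set of lengths; prefer languages with a shorter shortest word, then larger ones. Then
  \<open>L(p)\<close> is taught by its shortest word together with, for each occurrence count \<open>g \<le> m\<close> of a
  variable, the word that is \<open>g\<close> longer.

  For lower bounds, a minimal element of a finite family under the order must be taught against the
  whole family, so it needs one example for each neighbour that differs from it in a single word; the
  languages with length sets \<open>{0} \<union> A \<union> [2k, \<infinity>)\<close>, \<open>A \<subseteq> [k, 2k)\<close>, give \<open>\<Omega>(m)\<close>. Over an infinite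
  alphabet, teaching every language by a single example is impossible because it would force a cycle
  in the order among \<open>\<Sigma>*\<close>, a language \<open>{w u u}\<close> and singletons \<open>{k k}\<close>.\<close>

section \<open>Preference-based teaching dimension\<close>

lemma consistent_singleton [simp]: "consistent L {(w, b)} \<longleftrightarrow> (w \<in> L) = b"
  by (simp add: consistent_def)

lemma teaching_set_pred:
  assumes "teaching_set (C - {L'. R L' L}) L T" "L' \<in> C" "consistent L' T" "L' \<noteq> L"
  shows "R L' L"
  using assms by (auto simp: teaching_set_def)

lemma pref_td_le_card:
  "teaching_set (C - {L'. R L' L}) L T \<Longrightarrow> finite T \<Longrightarrow> pref_td C R L \<le> enat (card T)"
  unfolding pref_td_def by (rule Inf_lower) blast

lemma PBTD_le:
  assumes "strict_po_on C R" "\<And>L. L \<in> C \<Longrightarrow> pref_td C R L \<le> k"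
  shows "PBTD C \<le> k"
proof -
  have "PBTD C \<le> PBTD_order C R"
    unfolding PBTD_def using assms(1) by (blast intro: Inf_lower)
  also have "\<dots> \<le> k"
    unfolding PBTD_order_def using assms(2) by (blast intro: SUP_least)
  finally show ?thesis .
qed

lemma PBTD_ge:
  "(\<And>R. strict_po_on C R \<Longrightarrow> k \<le> PBTD_order C R) \<Longrightarrow> k \<le> PBTD C"
  unfolding PBTD_def by (auto intro: Inf_greatest)

lemma strict_po_on_asym:
  "strict_po_on C R \<Longrightarrow> a \<in> C \<Longrightarrow> b \<in> C \<Longrightarrow> R a b \<Longrightarrow> \<not> R b a"
  unfolding strict_po_on_def by blast

lemma strict_po_on_trans:
  "strict_po_on C R \<Longrightarrow> a \<in> C \<Longrightarrow> b \<in> C \<Longrightarrow> c \<in> C \<Longrightarrow> R a b \<Longrightarrow> R b c \<Longrightarrow> R a c"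
  unfolding strict_po_on_def by blast

lemma strict_po_on_finite_has_minimal:
  assumes po: "strict_po_on C R" and "F \<subseteq> C" "finite F" "F \<noteq> {}"
  shows "\<exists>L\<in>F. \<forall>L'\<in>F. \<not> R L' L"
  using assms(3,4,2)
proof (induction F rule: finite_ne_induct)
  case (singleton x)
  then show ?case using po by (auto simp: strict_po_on_def)
next
  case (insert x F)
  then obtain m where m: "m \<in> F" "\<forall>L'\<in>F. \<not> R L' m" by auto
  show ?case
  proof (cases "R x m")
    case True
    have "\<not> R L' x" if "L' \<in> insert x F" for L'
      using that m True insert.prems po unfolding strict_po_on_def by blast
    then show ?thesis by blast
  next
    case False
    then show ?thesis using m by auto
  qed
qed

text \<open>A teaching set of size below 2 can always be taken to be a single correctly labelled
  word, since adding consistent examples to a teaching set keeps it one.\<close>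

lemma pref_td_less_2_imp_teaching_word:
  assumes "pref_td C R L < 2"
  shows "\<exists>w. teaching_set (C - {L'. R L' L}) L {(w, w \<in> L)}"
proof -
  obtain T where T: "finite T" "teaching_set (C - {L'. R L' L}) L T" "card T < 2"
    using assms unfolding pref_td_def Inf_less_iff by (auto simp: numeral_eq_enat)
  show ?thesis
  proof (cases "T = {}")
    case True
    then show ?thesis using T(2) by (auto simp: teaching_set_def consistent_def)
  next
    case False
    then obtain w b where "T = {(w, b)}"
      using T by (metis One_nat_def card_1_singletonE less_2_cases card_0_eq prod.exhaust)
    then show ?thesis using T(2) by (auto simp: teaching_set_def)
  qed
qed

lemma PBTD_order_ge_neighbour_family:
  assumes po: "strict_po_on C R" and "F \<subseteq> C" "finite F" "F \<noteq> {}"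
    and neighbours: "\<And>L. L \<in> F \<Longrightarrow> \<exists>W. finite W \<and> k \<le> card W \<and>
          (\<forall>w\<in>W. \<exists>L'\<in>F. L' \<noteq> L \<and> L' - {w} = L - {w})"
  shows "enat k \<le> PBTD_order C R"
proof -
  obtain L where L: "L \<in> F" "\<forall>L'\<in>F. \<not> R L' L"
    using strict_po_on_finite_has_minimal[OF assms(1-4)] by blast
  obtain W where W: "finite W" "k \<le> card W" "\<forall>w\<in>W. \<exists>L'\<in>F. L' \<noteq> L \<and> L' - {w} = L - {w}"
    using neighbours[OF L(1)] by blast
  have "enat k \<le> pref_td C R L"
    unfolding pref_td_def
  proof (rule Inf_greatest, clarify)
    fix T assume T: "finite T" "teaching_set (C - {L'. R L' L}) L T"
    txt \<open>A neighbour differing from the minimal \<open>L\<close> only at \<open>w\<close> must be refuted by \<open>T\<close>,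
      which forces \<open>w\<close> itself into \<open>T\<close>.\<close>
    have "(w, w \<in> L) \<in> T" if "w \<in> W" for w
    proof -
      obtain L' where L': "L' \<in> F" "L' \<noteq> L" "L' - {w} = L - {w}" using W(3) \<open>w \<in> W\<close> by blast
      have "\<not> consistent L' T"
        using teaching_set_pred[of C R L T, OF T(2)] L L' \<open>F \<subseteq> C\<close> by blast
      then obtain v b where vb: "(v, b) \<in> T" "(v \<in> L') \<noteq> b" unfolding consistent_def by auto
      moreover have "(v \<in> L) = b" using T(2) vb(1) unfolding teaching_set_def consistent_def by auto
      ultimately have "v = w" using L'(3) by blast
      then show ?thesis using vb \<open>(v \<in> L) = b\<close> by auto
    qed
    then have "(\<lambda>w. (w, w \<in> L)) ` W \<subseteq> T" by blast
    then have "card ((\<lambda>w. (w, w \<in> L)) ` W) \<le> card T" using T(1) by (rule card_mono[rotated])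
    moreover have "card ((\<lambda>w. (w, w \<in> L)) ` W) = card W" by (rule card_image) (auto simp: inj_on_def)
    ultimately show "enat k \<le> enat (card T)" using W(2) by simp
  qed
  also have "\<dots> \<le> PBTD_order C R"
    unfolding PBTD_order_def using L \<open>F \<subseteq> C\<close> by (auto intro: SUP_upper)
  finally show ?thesis .
qed

section \<open>Patterns and substitutions\<close>

definition letters :: "'a pattern \<Rightarrow> 'a set" where
  "letters p = {a. Let a \<in> set p}"

definition vars :: "'a pattern \<Rightarrow> nat set" where
  "vars p = {x. Var x \<in> set p}"

lemma finite_letters: "finite (letters p)"
  unfolding letters_def
  by (rule finite_subset[of _ "(\<lambda>s. case s of Let a \<Rightarrow> a) ` set p"]) force+

lemma finite_vars: "finite (vars p)"
  unfolding vars_def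
  by (rule finite_subset[of _ "(\<lambda>s. case s of Var x \<Rightarrow> x) ` set p"]) force+

lemma subst_simps [simp]:
  "subst h [] = []" "subst h (Var x # p) = h x @ subst h p" "subst h (Let a # p) = a # subst h p"
  "subst h (p @ q) = subst h p @ subst h q"
  by (auto simp: subst_def)

lemma subst_map_Let [simp]: "subst h (map Let u) = u"
  by (induction u) auto

lemma set_subst: "set (subst h p) = letters p \<union> (\<Union>x\<in>vars p. set (h x))"
proof (induction p)
  case (Cons s p)
  then show ?case by (cases s) (auto simp: letters_def vars_def)
qed (simp add: letters_def vars_def)

lemma concat_map_subst:
  "(\<And>a. a \<in> letters q \<Longrightarrow> \<phi> a = [a]) \<Longrightarrow>
    concat (map \<phi> (subst g q)) = subst (\<lambda>x. concat (map \<phi> (g x))) q"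
proof (induction q)
  case (Cons s q)
  then show ?case by (cases s) (auto simp: letters_def)
qed simp

lemma patlang_Var: "patlang [Var x] = UNIV"
  unfolding patlang_def by (auto intro!: exI[of _ "\<lambda>_. _"])

lemma patlang_map_Let: "patlang (map Let u) = {u}"
  unfolding patlang_def by auto

lemma patlang_map_Let_square: "patlang (map Let w @ [Var x, Var x]) = {w @ u @ u | u. True}"
  unfolding patlang_def
proof (intro equalityI subsetI)
  fix v assume "v \<in> {w @ u @ u | u. True}"
  then obtain u where "v = w @ u @ u" by blast
  then show "v \<in> {subst h (map Let w @ [Var x, Var x]) | h. True}"
    by (auto intro!: exI[of _ "\<lambda>_. u"])
qed auto

lemma patlang_in_lang_class: "p \<noteq> [] \<Longrightarrow> patlang p \<in> lang_class all_patterns"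
  by (auto simp: lang_class_def all_patterns_def)

lemma UNIV_in_lang_class: "UNIV \<in> lang_class all_patterns"
  using patlang_in_lang_class[of "[Var 0]"] by (simp add: patlang_Var)

lemma singleton_in_lang_class: "u \<noteq> [] \<Longrightarrow> {u} \<in> lang_class all_patterns"
  using patlang_in_lang_class[of "map Let u"] by (simp add: patlang_map_Let)

section \<open>The infinite alphabet: upper bound\<close>

text \<open>Code the variable \<open>x\<close> by the letter \<open>N + 2 x\<close> or \<open>N + 2 x + 1\<close>, with \<open>N\<close> above all
  letters of \<open>p\<close>. A pattern generating both codings of \<open>p\<close> can only use letters below \<open>N\<close>,
  and then decoding shows that it generates all of \<open>patlang p\<close>.\<close>

lemma letters_below_if_generates_codings:
  fixes p q :: "nat pattern"
  assumes p: "letters p \<subseteq> {..<N}"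
    and even: "subst (\<lambda>x. [N + 2 * x]) p \<in> patlang q"
    and odd: "subst (\<lambda>x. [N + 2 * x + 1]) p \<in> patlang q"
  shows "letters q \<subseteq> {..<N}"
proof
  fix a assume a: "a \<in> letters q"
  have letter_in: "a \<in> set w" if "w \<in> patlang q" for w
    using that a by (auto simp: patlang_def set_subst)
  show "a \<in> {..<N}"
  proof (rule ccontr)
    assume "a \<notin> {..<N}"
    then have "a \<notin> letters p" using p by blast
    then have "\<exists>x. a = N + 2 * x" "\<exists>y. a = N + 2 * y + 1"
      using letter_in[OF even] letter_in[OF odd] by (auto simp: set_subst)
    then show False by presburger
  qed
qed

lemma patlang_subset_if_generates_coding:
  fixes p q :: "nat pattern"
  assumes "letters p \<subseteq> {..<N}" "letters q \<subseteq> {..<N}"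
    and coding: "subst (\<lambda>x. [N + 2 * x]) p \<in> patlang q"
  shows "patlang p \<subseteq> patlang q"
proof
  fix w assume "w \<in> patlang p"
  then obtain h where w: "w = subst h p" by (auto simp: patlang_def)
  obtain g where g: "subst (\<lambda>x. [N + 2 * x]) p = subst g q"
    using coding by (auto simp: patlang_def)
  define decode where "decode b = (if N \<le> b then h ((b - N) div 2) else [b])" for b
  have "w = concat (map decode (subst (\<lambda>x. [N + 2 * x]) p))"
    unfolding w using assms(1) by (subst concat_map_subst) (auto simp: decode_def)
  also have "\<dots> = subst (\<lambda>x. concat (map decode (g x))) q"
    unfolding g using assms(2) by (intro concat_map_subst) (auto simp: decode_def)
  finally show "w \<in> patlang q" by (auto simp: patlang_def)
qed

lemma PBTD_all_patterns_le_2: "PBTD (lang_class (all_patterns :: nat pattern set)) \<le> 2"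
proof (rule PBTD_le[where R = "\<lambda>L' L. L \<subset> L'"])
  show "strict_po_on (lang_class all_patterns) (\<lambda>L' L. L \<subset> L')"
    unfolding strict_po_on_def by auto
next
  fix L :: "nat list set" assume "L \<in> lang_class all_patterns"
  then obtain p where p: "p \<noteq> []" "L = patlang p"
    by (auto simp: lang_class_def all_patterns_def)
  obtain N where N: "letters p \<subseteq> {..<N}" using finite_letters finite_nat_bounded by blast
  define w where "w c = subst (\<lambda>x. [N + 2 * x + c]) p" for c
  define T where "T = {(w 0, True), (w 1, True)}"
  have "teaching_set (lang_class all_patterns - {L'. L \<subset> L'}) L T"
    unfolding teaching_set_def
  proof (intro conjI ballI impI)
    show "consistent L T" by (auto simp: T_def consistent_def p w_def patlang_def)
  next
    fix L' assume L': "L' \<in> lang_class all_patterns - {L'. L \<subset> L'}" "consistent L' T"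
    then obtain q where q: "L' = patlang q" by (auto simp: lang_class_def)
    have "w 0 \<in> patlang q" "w 1 \<in> patlang q" using L'(2) q by (auto simp: T_def consistent_def)
    then have "patlang p \<subseteq> patlang q"
      using N letters_below_if_generates_codings patlang_subset_if_generates_coding
      by (simp add: w_def)
    then show "L' = L" using L'(1) p q by auto
  qed
  then have "pref_td (lang_class all_patterns) (\<lambda>L' L. L \<subset> L') L \<le> enat (card T)"
    by (rule pref_td_le_card) (simp add: T_def)
  also have "card T \<le> 2" unfolding T_def by (simp add: card_insert_le_m1)
  finally show "pref_td (lang_class all_patterns) (\<lambda>L' L. L \<subset> L') L \<le> 2"
    by (simp add: numeral_eq_enat)
qed

section \<open>The infinite alphabet: lower bound\<close>

lemma infinite_ex_pair_avoiding:
  assumes "infinite K"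
  shows "\<exists>i\<in>K. \<exists>j\<in>K. i \<noteq> j \<and> e i \<noteq> j \<and> e j \<noteq> i"
proof -
  obtain k1 where k1: "k1 \<in> K" using infinite_imp_nonempty[OF assms] by blast
  have "infinite (K - {k1, e k1})" using assms by simp
  from infinite_imp_nonempty[OF this] obtain k2 where k2: "k2 \<in> K - {k1, e k1}" by blast
  have "infinite (K - {k1, k2, e k1})" using assms by simp
  from infinite_imp_nonempty[OF this] obtain k3 where k3: "k3 \<in> K - {k1, k2, e k1}" by blast
  txt \<open>If neither \<open>{k1, k2}\<close> nor \<open>{k1, k3}\<close> works, then \<open>e k2 = e k3 = k1\<close> and \<open>{k2, k3}\<close> works.\<close>
  show ?thesis
  proof (cases "e k2 = k1")
    case False
    then show ?thesis using k1 k2 by blast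
  next
    case True
    show ?thesis
    proof (cases "e k3 = k1")
      case False
      then show ?thesis using k1 k3 by blast
    next
      case True
      then show ?thesis using \<open>e k2 = k1\<close> k2 k3 by blast
    qed
  qed
qed

context
  fixes R :: "nat list set \<Rightarrow> nat list set \<Rightarrow> bool" and t :: "nat list set \<Rightarrow> nat list"
  assumes po: "strict_po_on (lang_class (all_patterns :: nat pattern set)) R"
    and teach: "\<And>L. L \<in> lang_class all_patterns \<Longrightarrow>
      teaching_set (lang_class all_patterns - {L'. R L' L}) L {(t L, t L \<in> L)}"
begin

lemma below_if_agrees_on_teaching_word:
  assumes "L \<in> lang_class all_patterns" "L' \<in> lang_class all_patterns" "L' \<noteq> L"
    and "(t L \<in> L') = (t L \<in> L)"
  shows "R L' L"
  using teaching_set_pred[of "lang_class all_patterns" R L, OF teach[OF assms(1)] assms(2)] assms(3,4)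
  by simp

lemma ex_square_above_UNIV:
  assumes "finite E"
  shows "\<exists>k. [k, k] \<notin> E \<and> R UNIV {[k, k]}"
proof (rule ccontr)
  assume contra: "\<not> ?thesis"
  define K where "K = {k. [k, k] \<notin> E}"
  have "finite ((\<lambda>k. [k, k]) -` E)" using assms by (rule finite_vimageI) (simp add: inj_def)
  moreover have "K = - ((\<lambda>k. [k, k]) -` E)" unfolding K_def by auto
  ultimately have "infinite K" by simp
  have square_in: "{[k, k :: nat]} \<in> lang_class all_patterns" for k by (simp add: singleton_in_lang_class)
  have negative: "t {[k, k]} \<noteq> [k, k]" if "k \<in> K" for k
  proof
    assume "t {[k, k]} = [k, k]"
    then have "R UNIV {[k, k]}"
      using below_if_agrees_on_teaching_word[OF square_in UNIV_in_lang_class] by auto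
    then show False using contra that unfolding K_def by blast
  qed
  have cross: "R {[i, i]} {[j, j]}" if "j \<in> K" "hd (t {[j, j]}) \<noteq> i" "i \<noteq> j" for i j
  proof -
    have "t {[j, j]} \<noteq> [i, i]" using that(2) by auto
    then show ?thesis
      using below_if_agrees_on_teaching_word[OF square_in square_in, of i j] negative[OF that(1)] that(3)
      by auto
  qed
  obtain i j where "i \<in> K" "j \<in> K" "i \<noteq> j" "hd (t {[i, i]}) \<noteq> j" "hd (t {[j, j]}) \<noteq> i"
    using infinite_ex_pair_avoiding[OF \<open>infinite K\<close>, of "\<lambda>k. hd (t {[k, k]})"] by blast
  then have "R {[i, i]} {[j, j]}" "R {[j, j]} {[i, i]}" using cross[of j i] cross[of i j] by auto
  then show False using strict_po_on_asym[OF po square_in square_in] by blast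
qed

text \<open>The languages \<open>UNIV\<close>, \<open>M = {w u u}\<close> with \<open>w\<close> the teaching word of \<open>UNIV\<close>, and a
  singleton \<open>{k k}\<close> supplied by the previous lemma form a cycle of \<open>R\<close>.\<close>

lemma no_teaching_word_function: False
proof -
  define w where "w = t UNIV"
  define M where "M = patlang (map Let w @ [Var 0, Var 0])"
  have M: "M = {w @ u @ u | u. True}" unfolding M_def by (rule patlang_map_Let_square)
  have M_in: "M \<in> lang_class all_patterns" unfolding M_def by (rule patlang_in_lang_class) simp
  have "w @ [0] \<notin> M"
  proof
    assume "w @ [0] \<in> M"
    then obtain u where "w @ [0] = w @ u @ u" unfolding M by blast
    then have "length (w @ [0]) = length (w @ u @ u)" by (rule arg_cong)
    then show False by simp presburger
  qed
  then have "M \<noteq> UNIV" by blast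
  have "w \<in> M" unfolding M by (auto intro: exI[of _ "[]"])
  have M_UNIV: "R M UNIV"
    using below_if_agrees_on_teaching_word[OF UNIV_in_lang_class M_in \<open>M \<noteq> UNIV\<close>] \<open>w \<in> M\<close>
    unfolding w_def by simp
  show False
  proof (cases "t M \<in> M")
    case True
    then have "R UNIV M"
      using below_if_agrees_on_teaching_word[OF M_in UNIV_in_lang_class] \<open>M \<noteq> UNIV\<close> by auto
    then show False using M_UNIV strict_po_on_asym[OF po M_in UNIV_in_lang_class] by blast
  next
    case False
    obtain k where k: "[k, k] \<notin> {t M}" "R UNIV {[k, k]}" using ex_square_above_UNIV by blast
    have "w @ [0, 0] \<in> M" "w @ [1, 1] \<in> M" unfolding M by (auto intro: exI[of _ "[_]"])
    moreover have "w @ [0, 0] \<noteq> w @ [1, 1]" by simp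
    ultimately have "{[k, k]} \<noteq> M" by (metis singletonD)
    then have "R {[k, k]} M"
      using below_if_agrees_on_teaching_word[OF M_in singleton_in_lang_class] False k(1) by auto
    then have "R {[k, k]} UNIV"
      using strict_po_on_trans[OF po singleton_in_lang_class M_in UNIV_in_lang_class] M_UNIV k(1) by auto
    then show False using k(2) strict_po_on_asym[OF po UNIV_in_lang_class singleton_in_lang_class] by blast
  qed
qed

end

lemma PBTD_order_all_patterns_ge_2:
  assumes po: "strict_po_on (lang_class (all_patterns :: nat pattern set)) R"
  shows "2 \<le> PBTD_order (lang_class all_patterns) R"
proof (rule ccontr)
  assume "\<not> 2 \<le> PBTD_order (lang_class all_patterns) R"
  then have "pref_td (lang_class all_patterns) R L < 2" if "L \<in> lang_class all_patterns" for L
    using that unfolding PBTD_order_def by (meson SUP_upper le_less_trans not_le)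
  then have "\<forall>L\<in>lang_class all_patterns.
      \<exists>w. teaching_set (lang_class all_patterns - {L'. R L' L}) L {(w, w \<in> L)}"
    using pref_td_less_2_imp_teaching_word by blast
  from bchoice[OF this] obtain t where "\<forall>L\<in>lang_class all_patterns.
      teaching_set (lang_class all_patterns - {L'. R L' L}) L {(t L, t L \<in> L)}" by blast
  then show False using no_teaching_word_function[OF po] by blast
qed

lemma PBTD_all_patterns: "PBTD (lang_class (all_patterns :: nat pattern set)) = 2"
  using PBTD_all_patterns_le_2 PBTD_ge[OF PBTD_order_all_patterns_ge_2] by (rule antisym)

section \<open>The unary alphabet\<close>

definition var_occ :: "nat \<Rightarrow> 'a pattern \<Rightarrow> nat" where
  "var_occ x p = length (filter (\<lambda>s. s = Var x) p)"

definition letter_count :: "'a pattern \<Rightarrow> nat" where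
  "letter_count p = length (filter (\<lambda>s. case s of Let _ \<Rightarrow> True | Var _ \<Rightarrow> False) p)"

lemma var_occ_pos: "x \<in> vars p \<Longrightarrow> 0 < var_occ x p"
  by (auto simp: var_occ_def vars_def filter_empty_conv)

lemma length_subst:
  assumes "finite V" "vars p \<subseteq> V"
  shows "length (subst h p) = letter_count p + (\<Sum>x\<in>V. var_occ x p * length (h x))"
  using assms(2)
proof (induction p)
  case Nil
  then show ?case by (simp add: letter_count_def var_occ_def)
next
  case (Cons s p)
  then have IH: "length (subst h p) = letter_count p + (\<Sum>x\<in>V. var_occ x p * length (h x))"
    by (auto simp: vars_def)
  show ?case
  proof (cases s)
    case (Var y)
    then have "y \<in> V" using Cons.prems by (auto simp: vars_def)
    have "(\<Sum>x\<in>V. var_occ x (s # p) * length (h x))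
        = (\<Sum>x\<in>V. (if x = y then length (h x) else 0) + var_occ x p * length (h x))"
      using Var by (intro sum.cong) (auto simp: var_occ_def)
    also have "\<dots> = length (h y) + (\<Sum>x\<in>V. var_occ x p * length (h x))"
      using assms(1) \<open>y \<in> V\<close> by (simp add: sum.distrib)
    finally show ?thesis using IH Var by (simp add: letter_count_def)
  next
    case (Let a)
    then show ?thesis using IH by (simp add: var_occ_def letter_count_def)
  qed
qed

lemma unit_list_eq_iff_length_eq: "(xs :: unit list) = ys \<longleftrightarrow> length xs = length ys"
  by (auto simp: list_eq_iff_nth_eq)

lemma mem_patlang_unit:
  "(w :: unit list) \<in> patlang p \<longleftrightarrow>
    (\<exists>l. length w = letter_count p + (\<Sum>x\<in>vars p. var_occ x p * l x))"
proof
  assume "w \<in> patlang p"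
  then obtain h where "w = subst h p" by (auto simp: patlang_def)
  then show "\<exists>l. length w = letter_count p + (\<Sum>x\<in>vars p. var_occ x p * l x)"
    by (intro exI[of _ "\<lambda>x. length (h x)"]) (simp add: length_subst[OF finite_vars order_refl])
next
  assume "\<exists>l. length w = letter_count p + (\<Sum>x\<in>vars p. var_occ x p * l x)"
  then obtain l where l: "length w = letter_count p + (\<Sum>x\<in>vars p. var_occ x p * l x)" by blast
  have "length (subst (\<lambda>x. replicate (l x) ()) p) = length w"
    unfolding l by (simp add: length_subst[OF finite_vars order_refl])
  then have "w = subst (\<lambda>x. replicate (l x) ()) p" by (simp add: unit_list_eq_iff_length_eq)
  then show "w \<in> patlang p" by (auto simp: patlang_def)
qed

definition min_len :: "unit list set \<Rightarrow> nat" where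
  "min_len L = (LEAST n. replicate n () \<in> L)"

lemma min_len_patlang: "min_len (patlang (p :: unit pattern)) = letter_count p"
  unfolding min_len_def
proof (rule Least_equality)
  show "replicate (letter_count p) () \<in> patlang p"
    unfolding mem_patlang_unit by (auto intro: exI[of _ "\<lambda>_. 0"])
qed (auto simp: mem_patlang_unit)

text \<open>If \<open>q\<close> has as many letters as \<open>p\<close> and generates the lengths obtained from \<open>p\<close> by
  giving a single variable length one, then every length generated by \<open>p\<close>, being a combination
  of these, is generated by \<open>q\<close>.\<close>

lemma patlang_unit_subset:
  fixes p q :: "unit pattern"
  assumes letter_counts: "letter_count q = letter_count p"
    and generators: "\<And>x. x \<in> vars p \<Longrightarrow> replicate (letter_count p + var_occ x p) () \<in> patlang q"
  shows "patlang p \<subseteq> patlang q"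
proof
  have "\<exists>l. var_occ x p = (\<Sum>z\<in>vars q. var_occ z q * l z)" if "x \<in> vars p" for x
    using generators[OF that] letter_counts unfolding mem_patlang_unit by simp
  then obtain lx where lx: "\<And>x. x \<in> vars p \<Longrightarrow> var_occ x p = (\<Sum>z\<in>vars q. var_occ z q * lx x z)"
    by metis
  fix w assume "w \<in> patlang p"
  then obtain l where l: "length w = letter_count p + (\<Sum>x\<in>vars p. var_occ x p * l x)"
    unfolding mem_patlang_unit by blast
  have "(\<Sum>x\<in>vars p. var_occ x p * l x) = (\<Sum>x\<in>vars p. \<Sum>z\<in>vars q. var_occ z q * (lx x z * l x))"
    using lx by (simp add: sum_distrib_right mult.assoc)
  also have "\<dots> = (\<Sum>z\<in>vars q. var_occ z q * (\<Sum>x\<in>vars p. lx x z * l x))"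
    by (subst sum.swap) (simp add: sum_distrib_left)
  finally show "w \<in> patlang q"
    unfolding mem_patlang_unit using l letter_counts by auto
qed

definition min_len_supset_order :: "unit list set \<Rightarrow> unit list set \<Rightarrow> bool" where
  "min_len_supset_order L' L \<longleftrightarrow> min_len L' < min_len L \<or> (min_len L' = min_len L \<and> L \<subset> L')"

lemma strict_po_on_min_len_supset_order: "strict_po_on C min_len_supset_order"
  unfolding strict_po_on_def min_len_supset_order_def by auto

definition unit_teaching_set :: "unit pattern \<Rightarrow> (unit list \<times> bool) set" where
  "unit_teaching_set p = insert (replicate (letter_count p) (), True)
     ((\<lambda>x. (replicate (letter_count p + var_occ x p) (), True)) ` vars p)"

lemma teaching_set_unit_teaching_set:
  fixes p :: "unit pattern"
  assumes "\<forall>L\<in>C. \<exists>q. L = patlang q"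
  shows "teaching_set (C - {L'. min_len_supset_order L' (patlang p)}) (patlang p) (unit_teaching_set p)"
  unfolding teaching_set_def
proof (intro conjI ballI impI)
  have "replicate (letter_count p + var_occ x p) () \<in> patlang p" if "x \<in> vars p" for x
  proof -
    have "(\<Sum>y\<in>vars p. var_occ y p * (if y = x then 1 else 0)) = var_occ x p"
      using that finite_vars[of p] by (simp add: if_distrib cong: if_cong)
    then show ?thesis
      unfolding mem_patlang_unit by (auto intro!: exI[of _ "\<lambda>y. if y = x then 1 else 0"])
  qed
  moreover have "replicate (letter_count p) () \<in> patlang p"
    unfolding mem_patlang_unit by (auto intro: exI[of _ "\<lambda>_. 0"])
  ultimately show "consistent (patlang p) (unit_teaching_set p)"
    by (auto simp: unit_teaching_set_def consistent_def)
next
  fix L' assume L': "L' \<in> C - {L'. min_len_supset_order L' (patlang p)}"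
    and consistent: "consistent L' (unit_teaching_set p)"
  then obtain q where q: "L' = patlang q" using assms by blast
  have "replicate (letter_count p) () \<in> L'"
    using consistent by (auto simp: unit_teaching_set_def consistent_def)
  then have "letter_count q \<le> letter_count p"
    unfolding q min_len_patlang[symmetric] min_len_def by (rule Least_le)
  then have "letter_count q = letter_count p" and "\<not> patlang p \<subset> L'"
    using L' by (auto simp: q min_len_supset_order_def min_len_patlang)
  moreover have "patlang p \<subseteq> patlang q"
    using consistent \<open>letter_count q = letter_count p\<close>
    by (intro patlang_unit_subset) (auto simp: unit_teaching_set_def consistent_def q)
  ultimately show "L' = patlang p" using q by auto
qed

lemma card_unit_teaching_set:
  assumes "p \<in> patterns_bounded_occ m"
  shows "card (unit_teaching_set p) \<le> m + 1"
proof -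
  have "var_occ x p \<in> {1..m}" if "x \<in> vars p" for x
    using assms var_occ_pos[OF that] unfolding patterns_bounded_occ_def var_occ_def by (simp add: Suc_le_eq)
  then have "(\<lambda>x. var_occ x p) ` vars p \<subseteq> {1..m}" by blast
  from card_mono[OF finite_atLeastAtMost this]
  have "card ((\<lambda>x. var_occ x p) ` vars p) \<le> m" by simp
  moreover have "(\<lambda>x. (replicate (letter_count p + var_occ x p) (), True)) ` vars p
      = (\<lambda>g. (replicate (letter_count p + g) (), True)) ` (\<lambda>x. var_occ x p) ` vars p"
    by (simp add: image_image)
  ultimately have "card ((\<lambda>x. (replicate (letter_count p + var_occ x p) (), True)) ` vars p) \<le> m"
    using card_image_le[OF finite_imageI[OF finite_vars]] le_trans by metis
  then show ?thesis
    unfolding unit_teaching_set_def by (simp add: card_insert_if finite_vars)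
qed

lemma PBTD_bounded_occ_le:
  "PBTD (lang_class (patterns_bounded_occ m :: unit pattern set)) \<le> enat (m + 1)"
proof (rule PBTD_le[OF strict_po_on_min_len_supset_order])
  fix L assume "L \<in> lang_class (patterns_bounded_occ m :: unit pattern set)"
  then obtain p where p: "p \<in> patterns_bounded_occ m" "L = patlang p" by (auto simp: lang_class_def)
  have "pref_td (lang_class (patterns_bounded_occ m)) min_len_supset_order L
      \<le> enat (card (unit_teaching_set p))"
    unfolding p(2) by (rule pref_td_le_card teaching_set_unit_teaching_set)+
      (auto simp: lang_class_def unit_teaching_set_def finite_vars)
  also have "\<dots> \<le> enat (m + 1)" using card_unit_teaching_set[OF p(1)] by simp
  finally show "pref_td (lang_class (patterns_bounded_occ m)) min_len_supset_order L \<le> enat (m + 1)" .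
qed

definition gen_monoid :: "nat set \<Rightarrow> nat set" where
  "gen_monoid G = {\<Sum>g\<in>G. g * l g | l. True}"

lemma zero_in_gen_monoid: "0 \<in> gen_monoid G"
  unfolding gen_monoid_def by (auto intro!: exI[of _ "\<lambda>_. 0"])

lemma add_in_gen_monoid: "a \<in> gen_monoid G \<Longrightarrow> b \<in> gen_monoid G \<Longrightarrow> a + b \<in> gen_monoid G"
  unfolding gen_monoid_def
  by clarify (rule exI[of _ "\<lambda>g. _ g + _ g"], simp add: distrib_left sum.distrib)

lemma mult_in_gen_monoid:
  assumes "finite G" "g \<in> G"
  shows "c * g \<in> gen_monoid G"
proof -
  have "(\<Sum>x\<in>G. x * (if x = g then c else 0)) = c * g"
    using assms by (simp add: if_distrib cong: if_cong)
  then show ?thesis unfolding gen_monoid_def by (auto intro!: exI[of _ "\<lambda>x. if x = g then c else 0"])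
qed

text \<open>A combination of at least two generators, all of size at least \<open>k\<close>, is at least \<open>2 k\<close>.\<close>

lemma gen_monoid_cases:
  assumes "finite G" "\<And>g. g \<in> G \<Longrightarrow> k \<le> g" "n \<in> gen_monoid G"
  shows "n = 0 \<or> n \<in> G \<or> 2 * k \<le> n"
proof -
  obtain l where l: "n = (\<Sum>g\<in>G. g * l g)" using assms(3) unfolding gen_monoid_def by blast
  have "k * sum l G = (\<Sum>g\<in>G. k * l g)" by (simp add: sum_distrib_left)
  also have "\<dots> \<le> n" unfolding l using assms(2) by (intro sum_mono) simp
  finally have k_sum: "k * sum l G \<le> n" .
  consider "sum l G = 0" | "sum l G = 1" | "2 \<le> sum l G" by linarith
  then show ?thesis
  proof cases
    case 1
    then show ?thesis using assms(1) l by simp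
  next
    case 2
    then obtain g0 where g0: "g0 \<in> G" "l g0 = 1" "\<forall>g\<in>G. g \<noteq> g0 \<longrightarrow> l g = 0"
      using sum_eq_Suc0_iff[OF assms(1)] by (metis One_nat_def)
    then have "n = (\<Sum>g\<in>G. if g = g0 then g0 else 0)" unfolding l by (intro sum.cong) auto
    then show ?thesis using assms(1) g0(1) by simp
  next
    case 3
    then have "k * 2 \<le> k * sum l G" by (rule mult_le_mono2)
    then show ?thesis using k_sum by linarith
  qed
qed

lemma gen_monoid_interval:
  assumes "1 \<le> k" "A \<subseteq> {k..<2 * k}"
  shows "gen_monoid (A \<union> {2 * k..<4 * k}) = {0} \<union> A \<union> {2 * k..}"
proof (intro equalityI subsetI)
  let ?G = "A \<union> {2 * k..<4 * k}"
  have "finite ?G" using assms(2) finite_subset by auto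
  fix n
  show "n \<in> {0} \<union> A \<union> {2 * k..}" if "n \<in> gen_monoid ?G"
  proof -
    have "k \<le> g" if "g \<in> ?G" for g using that assms(2) by auto
    then show ?thesis using gen_monoid_cases[OF \<open>finite ?G\<close> _ that] by auto
  qed
  show "n \<in> gen_monoid ?G" if n: "n \<in> {0} \<union> A \<union> {2 * k..}"
  proof -
    consider "n = 0" | "n \<in> A" | "2 * k \<le> n" using n by auto
    then show ?thesis
    proof cases
      case 1
      then show ?thesis by (simp add: zero_in_gen_monoid)
    next
      case 2
      then show ?thesis using mult_in_gen_monoid[OF \<open>finite ?G\<close>, of n 1] by simp
    next
      case 3
      define q r where "q = n div (2 * k)" and "r = n mod (2 * k)"
      have "1 \<le> q" unfolding q_def using div_le_mono[OF 3, of "2 * k"] assms(1) by simp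
      have "r < 2 * k" unfolding r_def using assms(1) by simp
      have "n = q * (2 * k) + r" unfolding q_def r_def by (rule div_mult_mod_eq[symmetric])
      moreover have "q * (2 * k) = (q - 1) * (2 * k) + 2 * k" using \<open>1 \<le> q\<close> by (cases q) auto
      ultimately have "n = (q - 1) * (2 * k) + (2 * k + r)" by simp
      moreover have "(q - 1) * (2 * k) \<in> gen_monoid ?G" "2 * k + r \<in> gen_monoid ?G"
        using mult_in_gen_monoid[OF \<open>finite ?G\<close>, of "2 * k" "q - 1"]
          mult_in_gen_monoid[OF \<open>finite ?G\<close>, of "2 * k + r" 1] assms(1) \<open>r < 2 * k\<close> by auto
      ultimately show ?thesis using add_in_gen_monoid by metis
    qed
  qed
qed

definition gen_pattern :: "nat set \<Rightarrow> 'a pattern" where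
  "gen_pattern G = concat (map (\<lambda>g. replicate g (Var g)) (sorted_list_of_set G))"

lemma var_occ_gen_pattern:
  assumes "finite G"
  shows "var_occ x (gen_pattern G :: 'a pattern) = (if x \<in> G then x else 0)"
proof -
  have "distinct gs \<Longrightarrow> var_occ x (concat (map (\<lambda>g. replicate g (Var g :: 'a psym)) gs))
      = (if x \<in> set gs then x else 0)" for gs
    by (induction gs) (auto simp: var_occ_def filter_replicate)
  then show ?thesis using assms by (simp add: gen_pattern_def)
qed

lemma letter_count_gen_pattern: "letter_count (gen_pattern G :: 'a pattern) = 0"
proof -
  have "letter_count (concat (map (\<lambda>g. replicate g (Var g :: 'a psym)) gs)) = 0" for gs
    by (induction gs) (auto simp: letter_count_def filter_replicate)
  then show ?thesis by (simp add: gen_pattern_def)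
qed

lemma vars_gen_pattern: "finite G \<Longrightarrow> vars (gen_pattern G) = G - {0}"
  by (auto simp: vars_def gen_pattern_def)

lemma mem_patlang_gen_pattern:
  assumes "finite G" "0 \<notin> G"
  shows "(w :: unit list) \<in> patlang (gen_pattern G) \<longleftrightarrow> length w \<in> gen_monoid G"
proof -
  have "(\<Sum>x\<in>vars (gen_pattern G :: unit pattern). var_occ x (gen_pattern G :: unit pattern) * l x)
      = (\<Sum>g\<in>G. g * l g)" for l
    using assms by (simp add: vars_gen_pattern var_occ_gen_pattern)
  then show ?thesis by (simp add: mem_patlang_unit letter_count_gen_pattern gen_monoid_def)
qed

lemma gen_pattern_bounded_occ:
  assumes "finite G" "G \<noteq> {}" "G \<subseteq> {1..m}"
  shows "(gen_pattern G :: 'a pattern) \<in> patterns_bounded_occ m"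
proof -
  have "vars (gen_pattern G :: 'a pattern) \<noteq> {}" using assms by (auto simp: vars_gen_pattern)
  then have "(gen_pattern G :: 'a pattern) \<noteq> []" by (auto simp: vars_def)
  moreover have "var_occ x (gen_pattern G :: 'a pattern) \<le> m" for x
    using assms by (auto simp: var_occ_gen_pattern)
  ultimately show ?thesis unfolding patterns_bounded_occ_def var_occ_def by auto
qed

text \<open>For \<open>A \<subseteq> [k, 2 k)\<close> the language generated by \<open>A \<union> [2 k, 4 k)\<close> consists of the words of
  length in \<open>{0} \<union> A \<union> [2 k, \<infinity>)\<close>. Toggling one element of \<open>A\<close> changes the language in exactly
  one word, so each of these \<open>2^k\<close> languages has \<open>k\<close> such neighbours.\<close>

lemma PBTD_order_bounded_occ_ge:
  assumes "1 \<le> k" "4 * k \<le> m + 1"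
    and po: "strict_po_on (lang_class (patterns_bounded_occ m :: unit pattern set)) R"
  shows "enat k \<le> PBTD_order (lang_class (patterns_bounded_occ m)) R"
proof -
  define lang :: "nat set \<Rightarrow> unit list set"
    where "lang A = patlang (gen_pattern (A \<union> {2 * k..<4 * k}))" for A
  have mem_lang: "w \<in> lang A \<longleftrightarrow> length w \<in> {0} \<union> A \<union> {2 * k..}" if "A \<subseteq> {k..<2 * k}" for A w
  proof -
    have "finite (A \<union> {2 * k..<4 * k})" "0 \<notin> A \<union> {2 * k..<4 * k}"
      using that \<open>1 \<le> k\<close> finite_subset by auto
    then show ?thesis
      unfolding lang_def using mem_patlang_gen_pattern gen_monoid_interval[OF \<open>1 \<le> k\<close> that] by simp
  qed
  have lang_in: "lang A \<in> lang_class (patterns_bounded_occ m)" if "A \<subseteq> {k..<2 * k}" for A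
  proof -
    have "gen_pattern (A \<union> {2 * k..<4 * k}) \<in> patterns_bounded_occ m"
      using that assms(1,2) finite_subset by (intro gen_pattern_bounded_occ) auto
    then show ?thesis unfolding lang_def lang_class_def by blast
  qed
  define F where "F = lang ` Pow {k..<2 * k}"
  show ?thesis
  proof (rule PBTD_order_ge_neighbour_family[OF po])
    show "F \<subseteq> lang_class (patterns_bounded_occ m)" "finite F" "F \<noteq> {}"
      unfolding F_def using lang_in by auto
  next
    fix L assume "L \<in> F"
    then obtain A where A: "A \<subseteq> {k..<2 * k}" "L = lang A" unfolding F_def by auto
    have "\<exists>L'\<in>F. L' \<noteq> L \<and> L' - {w} = L - {w}" if w: "w \<in> (\<lambda>x. replicate x ()) ` {k..<2 * k}" for w
    proof -
      obtain x where x: "x \<in> {k..<2 * k}" "w = replicate x ()" using w by blast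
      define A' where "A' = (if x \<in> A then A - {x} else insert x A)"
      have A': "A' \<subseteq> {k..<2 * k}" using A x unfolding A'_def by auto
      have "x \<noteq> 0" "\<not> 2 * k \<le> x" using x \<open>1 \<le> k\<close> by auto
      then have "(w \<in> lang A') \<noteq> (w \<in> L)" using mem_lang[OF A'] mem_lang[OF A(1)] A x
        unfolding A'_def by auto
      moreover have "(v \<in> lang A') = (v \<in> L)" if "v \<noteq> w" for v
      proof -
        have "length v \<noteq> x" using that x by (auto simp: unit_list_eq_iff_length_eq)
        then show ?thesis using mem_lang[OF A'] mem_lang[OF A(1)] A unfolding A'_def by auto
      qed
      ultimately show ?thesis using A' unfolding F_def by blast
    qed
    moreover have "card ((\<lambda>x. replicate x ()) ` {k..<2 * k}) = k"
      by (subst card_image) (auto simp: inj_on_def)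
    ultimately show "\<exists>W. finite W \<and> k \<le> card W \<and> (\<forall>w\<in>W. \<exists>L'\<in>F. L' \<noteq> L \<and> L' - {w} = L - {w})"
      by (intro exI[of _ "(\<lambda>x. replicate x ()) ` {k..<2 * k}"]) auto
  qed
qed

lemma PBTD_order_bounded_occ_ge_1:
  assumes "1 \<le> m" and po: "strict_po_on (lang_class (patterns_bounded_occ m :: unit pattern set)) R"
  shows "enat 1 \<le> PBTD_order (lang_class (patterns_bounded_occ m)) R"
proof -
  define nonempty where "nonempty = patlang [Let (), Var 0]"
  have "w \<in> nonempty \<longleftrightarrow> w \<noteq> []" for w
  proof -
    have vars: "vars [Let (), Var 0] = {0}" by (auto simp: vars_def)
    show ?thesis unfolding nonempty_def mem_patlang_unit vars
      by (auto simp: var_occ_def letter_count_def intro: exI[of _ "\<lambda>_. length w - 1"])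
  qed
  then have neighbours: "UNIV - {[]} = nonempty - {[]}" "UNIV \<noteq> nonempty" by auto
  have "[Var 0] \<in> patterns_bounded_occ m" "[Let (), Var 0] \<in> patterns_bounded_occ m"
    unfolding patterns_bounded_occ_def using assms(1) by auto
  then have "patlang [Var 0] \<in> lang_class (patterns_bounded_occ m)"
    "nonempty \<in> lang_class (patterns_bounded_occ m)"
    unfolding nonempty_def lang_class_def by blast+
  then have family: "{UNIV, nonempty} \<subseteq> lang_class (patterns_bounded_occ m)"
    by (simp add: patlang_Var)
  show ?thesis
  proof (rule PBTD_order_ge_neighbour_family[OF po family])
    fix L assume "L \<in> {UNIV, nonempty}"
    then have "\<forall>w\<in>{[]}. \<exists>L'\<in>{UNIV, nonempty}. L' \<noteq> L \<and> L' - {w} = L - {w}"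
      using neighbours by auto
    then show "\<exists>W. finite W \<and> 1 \<le> card W \<and> (\<forall>w\<in>W. \<exists>L'\<in>{UNIV, nonempty}. L' \<noteq> L \<and> L' - {w} = L - {w})"
      by (intro exI[of _ "{[]}"]) simp
  qed auto
qed

lemma PBTD_bounded_occ_bounds:
  assumes "1 \<le> m"
  shows "\<exists>k. PBTD (lang_class (patterns_bounded_occ m :: unit pattern set)) = enat k \<and>
    m \<le> 8 * k \<and> k \<le> m + 1"
proof -
  obtain k where k: "PBTD (lang_class (patterns_bounded_occ m :: unit pattern set)) = enat k"
    using PBTD_bounded_occ_le[of m] enat_ile by blast
  have "k \<le> m + 1" using PBTD_bounded_occ_le[of m] k by simp
  moreover have "1 \<le> k" using PBTD_ge[OF PBTD_order_bounded_occ_ge_1[OF assms]] k by simp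
  moreover have "(m + 1) div 4 \<le> k" if "1 \<le> (m + 1) div 4"
    using PBTD_ge[OF PBTD_order_bounded_occ_ge[OF that, of m]] k by simp
  ultimately show ?thesis using k by (intro exI[of _ k]) (cases "m \<le> 7"; linarith)
qed

theorem mainTheorem14:
  shows "PBTD (lang_class (all_patterns :: nat pattern set)) = 2 \<and>
    (\<exists>c1 c2 :: real. c1 > 0 \<and> c2 > 0 \<and>
      (\<forall>m::nat. m \<ge> 1 \<longrightarrow>
         (\<exists>k::nat. PBTD (lang_class (patterns_bounded_occ m :: unit pattern set)) = enat k \<and>
            c1 * real m \<le> real k \<and> real k \<le> c2 * real m)))"
proof -
  have "\<exists>k. PBTD (lang_class (patterns_bounded_occ m :: unit pattern set)) = enat k \<and>
      1 / 8 * real m \<le> real k \<and> real k \<le> 2 * real m" if m: "m \<ge> 1" for m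
  proof -
    obtain k where "PBTD (lang_class (patterns_bounded_occ m :: unit pattern set)) = enat k"
      "m \<le> 8 * k" "k \<le> m + 1" using PBTD_bounded_occ_bounds[OF m] by blast
    then show ?thesis using m by (intro exI[of _ k]) auto
  qed
  moreover have "(1 / 8 :: real) > 0" "(2 :: real) > 0" by simp_all
  ultimately show ?thesis using PBTD_all_patterns by blast
qed

end
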